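(* Let $\mathcal{C}$ be an additive category, $\mathbb{E}:\mathcal{C}^{\mathrm{op}}\times\mathcal{C}\to\mathrm{Ab}$ a biadditive functor, and $\mathcal{I}$ an ideal of $\mathcal{C}$. Then $\mathcal{I}^\star$ is an additive subfunctor of $\mathbb{E}$ satisfying $\mathcal{I}\subseteq\mathrm{Ph}(\mathcal{I}^\star)$, and it is minimal with this property: for every additive subfunctor $\mathbb{F}\subseteq\mathbb{E}$ with $\mathcal{I}\subseteq\mathrm{Ph}(\mathbb{F})$ one has $\mathcal{I}^\star\subseteq\mathbb{F}$.
   Context: For $\delta\in\mathbb{E}(C,A)$, $a\in\mathcal{C}(A,A')$, $c\in\mathcal{C}(C',C)$ write $a_\star\delta:=\mathbb{E}(C,a)(\delta)\in\mathbb{E}(C,A')$ and $c^\star\delta:=\mathbb{E}(c,A)(\delta)\in\mathbb{E}(C',A)$. An ideal of $\mathcal{C}$ is a class of morphisms containing all zero morphisms, closed under sums of parallel morphisms and under composition on either side with arbitrary morphisms. An additive subfunctor $\mathbb{F}\subseteq\mathbb{E}$ is a choice of subgroups $\mathbb{F}(C,A)\subseteq\mathbb{E}(C,A)$ stable under all $a_\star$ and $c^\star$. A morphism $\varphi\in\mathcal{C}(X,C)$ is $\mathbb{F}$-phantom if $\varphi^\star\delta\in\mathbb{F}(X,A)$ for every object $A$ and every $\delta\in\mathbb{E}(C,A)$; $\mathrm{Ph}(\mathbb{F})$ denotes the class of $\mathbb{F}$-phantom morphisms. For an ideal $\mathcal{I}$, $\mathcal{I}^\star$ is given by $\mathcal{I}^\star(X,A)=\{i^\star\delta\mid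 C\in\mathcal{C},\ i\in\mathcal{I}(X,C),\ \delta\in\mathbb{E}(C,A)\}$. *)

theory Defs
  imports "HOL-Algebra.Group"
begin

text \<open>Hom X Y is the additive group C(X,Y) (written multiplicatively in HOL-Algebra:
  the group operation is the sum, the unit is the zero morphism).
  cmp X Y Z g f is the composite g o f of f : X -> Y and g : Y -> Z.\<close>

record ('o, 'm) precat =
  Hom :: "'o \<Rightarrow> 'o \<Rightarrow> 'm monoid"
  cmp :: "'o \<Rightarrow> 'o \<Rightarrow> 'o \<Rightarrow> 'm \<Rightarrow> 'm \<Rightarrow> 'm"
  idm :: "'o \<Rightarrow> 'm"

abbreviation mor :: "('o, 'm) precat \<Rightarrow> 'o \<Rightarrow> 'o \<Rightarrow> 'm set" where
  "mor C X Y \<equiv> carrier (Hom C X Y)"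

abbreviation zmor :: "('o, 'm) precat \<Rightarrow> 'o \<Rightarrow> 'o \<Rightarrow> 'm" where
  "zmor C X Y \<equiv> \<one>\<^bsub>Hom C X Y\<^esub>"

abbreviation addm :: "('o, 'm) precat \<Rightarrow> 'o \<Rightarrow> 'o \<Rightarrow> 'm \<Rightarrow> 'm \<Rightarrow> 'm" where
  "addm C X Y f g \<equiv> f \<otimes>\<^bsub>Hom C X Y\<^esub> g"

definition additive_category :: "('o, 'm) precat \<Rightarrow> bool" where
  "additive_category C \<longleftrightarrow>
     (\<forall>X Y. comm_group (Hom C X Y)) \<and>
     (\<forall>X Y Z f g. f \<in> mor C X Y \<longrightarrow> g \<in> mor C Y Z \<longrightarrow> cmp C X Y Z g f \<in> mor C X Z) \<and>
     (\<forall>W X Y Z f g h. f \<in> mor C W X \<longrightarrow> g \<in> mor C X Y \<longrightarrow> h \<in> mor C Y Z \<longrightarrow>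
        cmp C W Y Z h (cmp C W X Y g f) = cmp C W X Z (cmp C X Y Z h g) f) \<and>
     (\<forall>X. idm C X \<in> mor C X X) \<and>
     (\<forall>X Y f. f \<in> mor C X Y \<longrightarrow> cmp C X X Y f (idm C X) = f \<and> cmp C X Y Y (idm C Y) f = f) \<and>
     (\<forall>X Y Z f g g'. f \<in> mor C X Y \<longrightarrow> g \<in> mor C Y Z \<longrightarrow> g' \<in> mor C Y Z \<longrightarrow>
        cmp C X Y Z (addm C Y Z g g') f = addm C X Z (cmp C X Y Z g f) (cmp C X Y Z g' f)) \<and>
     (\<forall>X Y Z f f' g. f \<in> mor C X Y \<longrightarrow> f' \<in> mor C X Y \<longrightarrow> g \<in> mor C Y Z \<longrightarrow>
        cmp C X Y Z g (addm C X Y f f') = addm C X Z (cmp C X Y Z g f) (cmp C X Y Z g f')) \<and>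
     \<comment> \<open>zero object\<close>
     (\<exists>Z0. \<forall>X. mor C Z0 X = {zmor C Z0 X} \<and> mor C X Z0 = {zmor C X Z0}) \<and>
     \<comment> \<open>binary biproducts\<close>
     (\<forall>A B. \<exists>S p1 p2 i1 i2.
        p1 \<in> mor C S A \<and> p2 \<in> mor C S B \<and> i1 \<in> mor C A S \<and> i2 \<in> mor C B S \<and>
        cmp C A S A p1 i1 = idm C A \<and> cmp C B S B p2 i2 = idm C B \<and>
        cmp C A S B p2 i1 = zmor C A B \<and> cmp C B S A p1 i2 = zmor C B A \<and>
        addm C S S (cmp C S A S i1 p1) (cmp C S B S i2 p2) = idm C S)"

text \<open>A bifunctor E : C^op x C -> Ab.  EG E C A is the abelian group E(C,A);
  cov E C A A' a d is a_* d (for a : A -> A', d in E(C,A));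
  con E C' C A c d is c^* d (for c : C' -> C, d in E(C,A)).\<close>

record ('o, 'm, 'e) bifun =
  EG :: "'o \<Rightarrow> 'o \<Rightarrow> 'e monoid"
  cov :: "'o \<Rightarrow> 'o \<Rightarrow> 'o \<Rightarrow> 'm \<Rightarrow> 'e \<Rightarrow> 'e"
  con :: "'o \<Rightarrow> 'o \<Rightarrow> 'o \<Rightarrow> 'm \<Rightarrow> 'e \<Rightarrow> 'e"

abbreviation Eel :: "('o, 'm, 'e) bifun \<Rightarrow> 'o \<Rightarrow> 'o \<Rightarrow> 'e set" where
  "Eel E C A \<equiv> carrier (EG E C A)"

definition biadditive_functor :: "('o, 'm) precat \<Rightarrow> ('o, 'm, 'e) bifun \<Rightarrow> bool" where
  "biadditive_functor C E \<longleftrightarrow>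
     (\<forall>X A. comm_group (EG E X A)) \<and>
     \<comment> \<open>each a_* and c^* is a group homomorphism\<close>
     (\<forall>X A A' a. a \<in> mor C A A' \<longrightarrow> cov E X A A' a \<in> hom (EG E X A) (EG E X A')) \<and>
     (\<forall>X' X A c. c \<in> mor C X' X \<longrightarrow> con E X' X A c \<in> hom (EG E X A) (EG E X' A)) \<and>
     \<comment> \<open>functoriality in the covariant variable\<close>
     (\<forall>X A d. d \<in> Eel E X A \<longrightarrow> cov E X A A (idm C A) d = d) \<and>
     (\<forall>X A A' A'' a b d. a \<in> mor C A A' \<longrightarrow> b \<in> mor C A' A'' \<longrightarrow> d \<in> Eel E X A \<longrightarrow>
        cov E X A A'' (cmp C A A' A'' b a) d = cov E X A' A'' b (cov E X A A' a d)) \<and>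
     \<comment> \<open>functoriality in the contravariant variable\<close>
     (\<forall>X A d. d \<in> Eel E X A \<longrightarrow> con E X X A (idm C X) d = d) \<and>
     (\<forall>X'' X' X A c c' d. c' \<in> mor C X'' X' \<longrightarrow> c \<in> mor C X' X \<longrightarrow> d \<in> Eel E X A \<longrightarrow>
        con E X'' X A (cmp C X'' X' X c c') d = con E X'' X' A c' (con E X' X A c d)) \<and>
     \<comment> \<open>bifunctoriality\<close>
     (\<forall>X' X A A' c a d. c \<in> mor C X' X \<longrightarrow> a \<in> mor C A A' \<longrightarrow> d \<in> Eel E X A \<longrightarrow>
        cov E X' A A' a (con E X' X A c d) = con E X' X A' c (cov E X A A' a d)) \<and>
     \<comment> \<open>additivity on morphisms\<close>
     (\<forall>X A A' a b d. a \<in> mor C A A' \<longrightarrow> b \<in> mor C A A' \<longrightarrow> d \<in> Eel E X A \<longrightarrow>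
        cov E X A A' (addm C A A' a b) d = cov E X A A' a d \<otimes>\<^bsub>EG E X A'\<^esub> cov E X A A' b d) \<and>
     (\<forall>X' X A c c' d. c \<in> mor C X' X \<longrightarrow> c' \<in> mor C X' X \<longrightarrow> d \<in> Eel E X A \<longrightarrow>
        con E X' X A (addm C X' X c c') d = con E X' X A c d \<otimes>\<^bsub>EG E X' A\<^esub> con E X' X A c' d)"

definition ideal_of :: "('o, 'm) precat \<Rightarrow> ('o \<Rightarrow> 'o \<Rightarrow> 'm set) \<Rightarrow> bool" where
  "ideal_of C I \<longleftrightarrow>
     (\<forall>X Y. I X Y \<subseteq> mor C X Y) \<and>
     (\<forall>X Y. zmor C X Y \<in> I X Y) \<and>
     (\<forall>X Y f g. f \<in> I X Y \<longrightarrow> g \<in> I X Y \<longrightarrow> addm C X Y f g \<in> I X Y) \<and>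
     (\<forall>W X Y f g. f \<in> I X Y \<longrightarrow> g \<in> mor C W X \<longrightarrow> cmp C W X Y f g \<in> I W Y) \<and>
     (\<forall>X Y Z f h. f \<in> I X Y \<longrightarrow> h \<in> mor C Y Z \<longrightarrow> cmp C X Y Z h f \<in> I X Z)"

definition additive_subfunctor ::
  "('o, 'm) precat \<Rightarrow> ('o, 'm, 'e) bifun \<Rightarrow> ('o \<Rightarrow> 'o \<Rightarrow> 'e set) \<Rightarrow> bool" where
  "additive_subfunctor C E F \<longleftrightarrow>
     (\<forall>X A. subgroup (F X A) (EG E X A)) \<and>
     (\<forall>X A A' a d. a \<in> mor C A A' \<longrightarrow> d \<in> F X A \<longrightarrow> cov E X A A' a d \<in> F X A') \<and>
     (\<forall>X' X A c d. c \<in> mor C X' X \<longrightarrow> d \<in> F X A \<longrightarrow> con E X' X A c d \<in> F X' A)"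

definition Ph ::
  "('o, 'm) precat \<Rightarrow> ('o, 'm, 'e) bifun \<Rightarrow> ('o \<Rightarrow> 'o \<Rightarrow> 'e set) \<Rightarrow> 'o \<Rightarrow> 'o \<Rightarrow> 'm set" where
  "Ph C E F X Y = {\<phi> \<in> mor C X Y. \<forall>A d. d \<in> Eel E Y A \<longrightarrow> con E X Y A \<phi> d \<in> F X A}"

definition Istar ::
  "('o, 'm) precat \<Rightarrow> ('o, 'm, 'e) bifun \<Rightarrow> ('o \<Rightarrow> 'o \<Rightarrow> 'm set) \<Rightarrow> 'o \<Rightarrow> 'o \<Rightarrow> 'e set" where
  "Istar C E I X A = {con E X Y A i d | Y i d. i \<in> I X Y \<and> d \<in> Eel E Y A}"

end

theory Submission
  imports Defs
begin

text \<open>The elements i^*(d) are closed under the group law: given i^*(d) and i'^*(d')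
  with i : X -> Y and i' : X -> Y', pass to the biproduct Y (+) Y'. With k = j1 i + j2 i' in
  the ideal and e = p1^*(d) + p2^*(d'), biadditivity gives k^*(e) = i^*(d) + i'^*(d').
  Stability under a_* and c^* comes from bifunctoriality and the ideal property.\<close>

locale biadditive_context =
  fixes C :: "('o, 'm) precat" and E :: "('o, 'm, 'e) bifun"
  assumes additive: "additive_category C" and biadditive: "biadditive_functor C E"
begin

lemma group_Hom: "group (Hom C X Y)"
  using additive unfolding additive_category_def by (meson comm_group.axioms(2))

lemma cmp_closed: "f \<in> mor C X Y \<Longrightarrow> g \<in> mor C Y Z \<Longrightarrow> cmp C X Y Z g f \<in> mor C X Z"
  using additive unfolding additive_category_def by meson

lemma biproduct_exists:
  obtains S p1 p2 j1 j2 where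
    "p1 \<in> mor C S A" "p2 \<in> mor C S B" "j1 \<in> mor C A S" "j2 \<in> mor C B S"
    "cmp C A S A p1 j1 = idm C A" "cmp C B S B p2 j2 = idm C B"
    "cmp C A S B p2 j1 = zmor C A B" "cmp C B S A p1 j2 = zmor C B A"
  using additive unfolding additive_category_def by meson

lemma group_EG: "group (EG E X A)"
  using biadditive unfolding biadditive_functor_def by (meson comm_group.axioms(2))

lemma group_hom_con: "c \<in> mor C X' X \<Longrightarrow> group_hom (EG E X A) (EG E X' A) (con E X' X A c)"
  using biadditive group_EG unfolding biadditive_functor_def group_hom_def group_hom_axioms_def
  by meson

lemma con_closed: "c \<in> mor C X' X \<Longrightarrow> d \<in> Eel E X A \<Longrightarrow> con E X' X A c d \<in> Eel E X' A"
  using group_hom_con by (meson group_hom.hom_closed)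

lemma con_mult:
  "c \<in> mor C X' X \<Longrightarrow> d \<in> Eel E X A \<Longrightarrow> e \<in> Eel E X A \<Longrightarrow>
    con E X' X A c (d \<otimes>\<^bsub>EG E X A\<^esub> e) = con E X' X A c d \<otimes>\<^bsub>EG E X' A\<^esub> con E X' X A c e"
  using group_hom_con by (meson group_hom.hom_mult)

lemma con_inv:
  "c \<in> mor C X' X \<Longrightarrow> d \<in> Eel E X A \<Longrightarrow>
    con E X' X A c (inv\<^bsub>EG E X A\<^esub> d) = inv\<^bsub>EG E X' A\<^esub> con E X' X A c d"
  using group_hom_con by (meson group_hom.hom_inv)

lemma cov_closed: "a \<in> mor C A A' \<Longrightarrow> d \<in> Eel E X A \<Longrightarrow> cov E X A A' a d \<in> Eel E X A'"
  using biadditive unfolding biadditive_functor_def by (meson hom_in_carrier)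

lemma con_idm: "d \<in> Eel E X A \<Longrightarrow> con E X X A (idm C X) d = d"
  using biadditive unfolding biadditive_functor_def by meson

lemma con_cmp:
  "c' \<in> mor C X'' X' \<Longrightarrow> c \<in> mor C X' X \<Longrightarrow> d \<in> Eel E X A \<Longrightarrow>
    con E X'' X A (cmp C X'' X' X c c') d = con E X'' X' A c' (con E X' X A c d)"
  using biadditive unfolding biadditive_functor_def by meson

lemma cov_con:
  "c \<in> mor C X' X \<Longrightarrow> a \<in> mor C A A' \<Longrightarrow> d \<in> Eel E X A \<Longrightarrow>
    cov E X' A A' a (con E X' X A c d) = con E X' X A' c (cov E X A A' a d)"
  using biadditive unfolding biadditive_functor_def by meson

lemma con_addm:
  "c \<in> mor C X' X \<Longrightarrow> c' \<in> mor C X' X \<Longrightarrow> d \<in> Eel E X A \<Longrightarrow>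
    con E X' X A (addm C X' X c c') d = con E X' X A c d \<otimes>\<^bsub>EG E X' A\<^esub> con E X' X A c' d"
  using biadditive unfolding biadditive_functor_def by meson

lemma con_zmor:
  assumes d: "d \<in> Eel E X A"
  shows "con E X' X A (zmor C X' X) d = \<one>\<^bsub>EG E X' A\<^esub>"
proof -
  let ?x = "con E X' X A (zmor C X' X) d"
  have z: "zmor C X' X \<in> mor C X' X"
    using group_Hom by (meson group.is_monoid monoid.one_closed)
  have "?x \<otimes>\<^bsub>EG E X' A\<^esub> ?x = con E X' X A (addm C X' X (zmor C X' X) (zmor C X' X)) d"
    using con_addm[OF z z d] by simp
  also have "\<dots> = ?x"
    using group_Hom z by (simp add: group.is_monoid monoid.l_one)
  finally show ?thesis
    using group_EG con_closed[OF z d] by (simp add: group.l_cancel_one)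
qed

end

locale ideal_context = biadditive_context C E
  for C :: "('o, 'm) precat" and E :: "('o, 'm, 'e) bifun" +
  fixes I :: "'o \<Rightarrow> 'o \<Rightarrow> 'm set"
  assumes ideal: "ideal_of C I"
begin

lemma ideal_subset_mor: "I X Y \<subseteq> mor C X Y"
  using ideal unfolding ideal_of_def by meson

lemma zmor_in_ideal: "zmor C X Y \<in> I X Y"
  using ideal unfolding ideal_of_def by meson

lemma addm_in_ideal: "f \<in> I X Y \<Longrightarrow> g \<in> I X Y \<Longrightarrow> addm C X Y f g \<in> I X Y"
  using ideal unfolding ideal_of_def by meson

lemma cmp_right_in_ideal: "f \<in> I X Y \<Longrightarrow> g \<in> mor C W X \<Longrightarrow> cmp C W X Y f g \<in> I W Y"
  using ideal unfolding ideal_of_def by meson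

lemma cmp_left_in_ideal: "f \<in> I X Y \<Longrightarrow> h \<in> mor C Y Z \<Longrightarrow> cmp C X Y Z h f \<in> I X Z"
  using ideal unfolding ideal_of_def by meson

lemma IstarI: "i \<in> I X Y \<Longrightarrow> d \<in> Eel E Y A \<Longrightarrow> con E X Y A i d \<in> Istar C E I X A"
  unfolding Istar_def by blast

lemma IstarE:
  assumes "x \<in> Istar C E I X A"
  obtains Y i d where "x = con E X Y A i d" "i \<in> I X Y" "d \<in> Eel E Y A"
  using assms unfolding Istar_def by blast

lemma mult_in_Istar:
  assumes x: "x \<in> Istar C E I X A" and y: "y \<in> Istar C E I X A"
  shows "x \<otimes>\<^bsub>EG E X A\<^esub> y \<in> Istar C E I X A"
proof -
  obtain Y i d where x: "x = con E X Y A i d" and i: "i \<in> I X Y" and d: "d \<in> Eel E Y A"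
    using x by (rule IstarE)
  obtain Y' i' d' where y: "y = con E X Y' A i' d'" and i': "i' \<in> I X Y'" and d': "d' \<in> Eel E Y' A"
    using y by (rule IstarE)
  obtain S p1 p2 j1 j2 where p1: "p1 \<in> mor C S Y" and p2: "p2 \<in> mor C S Y'"
    and j1: "j1 \<in> mor C Y S" and j2: "j2 \<in> mor C Y' S"
    and e11: "cmp C Y S Y p1 j1 = idm C Y" and e22: "cmp C Y' S Y' p2 j2 = idm C Y'"
    and e12: "cmp C Y S Y' p2 j1 = zmor C Y Y'" and e21: "cmp C Y' S Y p1 j2 = zmor C Y' Y"
    by (rule biproduct_exists)
  have im: "i \<in> mor C X Y" "i' \<in> mor C X Y'" using i i' ideal_subset_mor by auto
  define k where "k = addm C X S (cmp C X Y S j1 i) (cmp C X Y' S j2 i')"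
  define e where "e = con E S Y A p1 d \<otimes>\<^bsub>EG E S A\<^esub> con E S Y' A p2 d'"
  have k: "k \<in> I X S"
    unfolding k_def using addm_in_ideal cmp_left_in_ideal i i' j1 j2 by blast
  have pd: "con E S Y A p1 d \<in> Eel E S A" "con E S Y' A p2 d' \<in> Eel E S A"
    using con_closed p1 p2 d d' by auto
  have e: "e \<in> Eel E S A"
    unfolding e_def using pd group_EG by (simp add: group.is_monoid monoid.m_closed)
  have j1e: "con E Y S A j1 e = d"
  proof -
    have "con E Y S A j1 e =
        con E Y S A j1 (con E S Y A p1 d) \<otimes>\<^bsub>EG E Y A\<^esub> con E Y S A j1 (con E S Y' A p2 d')"
      unfolding e_def using con_mult[OF j1 pd] .
    also have "\<dots> = d \<otimes>\<^bsub>EG E Y A\<^esub> \<one>\<^bsub>EG E Y A\<^esub>"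
      using con_cmp[OF j1 p1 d, symmetric] con_cmp[OF j1 p2 d', symmetric]
      by (simp add: e11 e12 con_idm[OF d] con_zmor[OF d'])
    finally show ?thesis
      using group_EG d by (simp add: group.is_monoid monoid.r_one)
  qed
  have j2e: "con E Y' S A j2 e = d'"
  proof -
    have "con E Y' S A j2 e =
        con E Y' S A j2 (con E S Y A p1 d) \<otimes>\<^bsub>EG E Y' A\<^esub> con E Y' S A j2 (con E S Y' A p2 d')"
      unfolding e_def using con_mult[OF j2 pd] .
    also have "\<dots> = \<one>\<^bsub>EG E Y' A\<^esub> \<otimes>\<^bsub>EG E Y' A\<^esub> d'"
      using con_cmp[OF j2 p1 d, symmetric] con_cmp[OF j2 p2 d', symmetric]
      by (simp add: e21 e22 con_idm[OF d'] con_zmor[OF d])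
    finally show ?thesis
      using group_EG d' by (simp add: group.is_monoid monoid.l_one)
  qed
  have "con E X S A k e =
      con E X S A (cmp C X Y S j1 i) e \<otimes>\<^bsub>EG E X A\<^esub> con E X S A (cmp C X Y' S j2 i') e"
    unfolding k_def using con_addm[OF cmp_closed[OF im(1) j1] cmp_closed[OF im(2) j2] e] .
  also have "\<dots> = x \<otimes>\<^bsub>EG E X A\<^esub> y"
    using con_cmp[OF im(1) j1 e] con_cmp[OF im(2) j2 e] j1e j2e x y by simp
  finally show ?thesis
    using IstarI[OF k e] by simp
qed

lemma subgroup_Istar: "subgroup (Istar C E I X A) (EG E X A)"
proof
  show "Istar C E I X A \<subseteq> Eel E X A"
    using con_closed ideal_subset_mor by (blast elim: IstarE)
next
  have "\<one>\<^bsub>EG E X A\<^esub> \<in> Eel E X A"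
    using group_EG by (meson group.is_monoid monoid.one_closed)
  then show "\<one>\<^bsub>EG E X A\<^esub> \<in> Istar C E I X A"
    using IstarI[OF zmor_in_ideal] con_zmor by simp
next
  fix x assume "x \<in> Istar C E I X A"
  then obtain Y i d where x: "x = con E X Y A i d" and i: "i \<in> I X Y" and d: "d \<in> Eel E Y A"
    by (rule IstarE)
  have "inv\<^bsub>EG E X A\<^esub> x = con E X Y A i (inv\<^bsub>EG E Y A\<^esub> d)"
    using con_inv[OF subsetD[OF ideal_subset_mor i] d] x by simp
  moreover have "inv\<^bsub>EG E Y A\<^esub> d \<in> Eel E Y A"
    using group_EG d by (rule group.inv_closed)
  ultimately show "inv\<^bsub>EG E X A\<^esub> x \<in> Istar C E I X A"
    using IstarI[OF i] by simp
qed (fact mult_in_Istar)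

lemma cov_in_Istar:
  assumes a: "a \<in> mor C A A'" and x: "x \<in> Istar C E I X A"
  shows "cov E X A A' a x \<in> Istar C E I X A'"
proof -
  obtain Y i d where x: "x = con E X Y A i d" and i: "i \<in> I X Y" and d: "d \<in> Eel E Y A"
    using x by (rule IstarE)
  have "cov E X A A' a x = con E X Y A' i (cov E Y A A' a d)"
    using cov_con[OF subsetD[OF ideal_subset_mor i] a d] x by simp
  then show ?thesis
    using IstarI[OF i cov_closed[OF a d]] by simp
qed

lemma con_in_Istar:
  assumes c: "c \<in> mor C X' X" and x: "x \<in> Istar C E I X A"
  shows "con E X' X A c x \<in> Istar C E I X' A"
proof -
  obtain Y i d where x: "x = con E X Y A i d" and i: "i \<in> I X Y" and d: "d \<in> Eel E Y A"
    using x by (rule IstarE)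
  have "con E X' X A c x = con E X' Y A (cmp C X' X Y i c) d"
    using con_cmp[OF c subsetD[OF ideal_subset_mor i] d] x by simp
  then show ?thesis
    using IstarI[OF cmp_right_in_ideal[OF i c] d] by simp
qed

lemma additive_subfunctor_Istar: "additive_subfunctor C E (Istar C E I)"
  unfolding additive_subfunctor_def using subgroup_Istar cov_in_Istar con_in_Istar by blast

lemma ideal_subset_Ph_Istar: "I X Y \<subseteq> Ph C E (Istar C E I) X Y"
  unfolding Ph_def using ideal_subset_mor IstarI by blast

end

lemma Istar_subset_if_ideal_phantom:
  assumes "\<And>X Y. I X Y \<subseteq> Ph C E F X Y"
  shows "Istar C E I X A \<subseteq> F X A"
  using assms unfolding Ph_def Istar_def by blast

theorem proposition3p2:
  fixes C :: "('o, 'm) precat" and E :: "('o, 'm, 'e) bifun" and I :: "'o \<Rightarrow> 'o \<Rightarrow> 'm set"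
  assumes "additive_category C" and "biadditive_functor C E" and "ideal_of C I"
  shows "additive_subfunctor C E (Istar C E I)
    \<and> (\<forall>X Y. I X Y \<subseteq> Ph C E (Istar C E I) X Y)
    \<and> (\<forall>F. additive_subfunctor C E F \<and> (\<forall>X Y. I X Y \<subseteq> Ph C E F X Y)
           \<longrightarrow> (\<forall>X A. Istar C E I X A \<subseteq> F X A))"
proof -
  interpret ideal_context C E I
    using assms by unfold_locales
  have "Istar C E I X A \<subseteq> F X A" if "\<forall>X Y. I X Y \<subseteq> Ph C E F X Y" for F X A
    using that by (intro Istar_subset_if_ideal_phantom) blast
  then show ?thesis
    using additive_subfunctor_Istar ideal_subset_Ph_Istar by blast
qed

end
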